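(* Let $\delta>0$ and let $\mathcal{G}$ be a class of graphs, each of average degree at least $2+\delta$, with unbounded girth. Let $\mathcal{A}$ be the class of all (unweighted) orientations of graphs in $\mathcal{G}$. Then $\mathcal{A}$ is not size-pliable.
   Context: An orientation of a graph is viewed as a structure over the signature $\{e\}$ with one binary symbol, where $e^{\mathbb{A}}(u,v)=1$ if $u\to v$ is an arc and $0$ otherwise. For structures $\mathbb{A},\mathbb{B}$ over a signature $\sigma$ (finite domain with functions $f^{\mathbb{A}}\colon A^{\mathrm{ar}(f)}\to\mathbb{Q}_{\ge0}$), $\mathrm{opt}(\mathbb{A},\mathbb{B})=\max_{h\colon A\to B}\sum_f\sum_{\bar x}f^{\mathbb{A}}(\bar x)f^{\mathbb{B}}(h(\bar x))$ over all maps, and $d_{\mathrm{opt}}(\mathbb{A},\mathbb{B})=\sup_{\mathbb{C}}|\ln\mathrm{opt}(\mathbb{A},\mathbb{C})-\ln\mathrm{opt}(\mathbb{B},\mathbb{C})|$ over all $\sigma$-structures $\mathbb{C}$ ($\ln0=-\infty$, $|\ln0-\ln0|=0$). A class $\mathcal{A}$ is size-pliable if for every $\varepsilon>0$ there is $k$ such that every $\mathbb{A}\in\mathcal{A}$ (signature $\sigma$) has a $\sigma$-structure $\mathbb{B}$ with domain of size at most $k$ and $d_{\mathrm{opt}}(\mathbb{A},\mathbb{B})\le\varepsilon$. *)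

theory Defs
  imports Complex_Main "HOL-Library.Extended_Real"
begin

text \<open>A structure over the signature with one binary function symbol e:
  a finite nonempty domain together with the interpretation of e
  (nonnegative rational values; only values on the domain matter).\<close>
type_synonym 'a struc = "'a set \<times> ('a \<Rightarrow> 'a \<Rightarrow> real)"

definition is_struc :: "'a struc \<Rightarrow> bool" where
  "is_struc S \<longleftrightarrow> finite (fst S) \<and> fst S \<noteq> {} \<and>
     (\<forall>x y. snd S x y \<in> \<rat> \<and> snd S x y \<ge> 0)"

definition opt :: "'a struc \<Rightarrow> 'b struc \<Rightarrow> real" where
  "opt S T = Max {(\<Sum>x\<in>fst S. \<Sum>y\<in>fst S. snd S x y * snd T (h x) (h y)) | h.
                   h ` fst S \<subseteq> fst T}"

text \<open>|ln a - ln b| with ln 0 = -infinity and |ln 0 - ln 0| = 0.\<close>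
definition ln_dist :: "real \<Rightarrow> real \<Rightarrow> ereal" where
  "ln_dist a b = (if a = 0 \<and> b = 0 then 0
                  else if a = 0 \<or> b = 0 then \<infinity>
                  else ereal \<bar>ln a - ln b\<bar>)"

text \<open>d_opt: supremum over all structures C (up to isomorphism every finite
  structure has a copy with domain a finite set of naturals).\<close>
definition d_opt :: "'a struc \<Rightarrow> 'b struc \<Rightarrow> ereal" where
  "d_opt S T = (SUP C \<in> {C :: nat struc. is_struc C}. ln_dist (opt S C) (opt T C))"

definition size_pliable :: "'a struc set \<Rightarrow> bool" where
  "size_pliable \<A> \<longleftrightarrow> (\<forall>\<epsilon>::real. \<epsilon> > 0 \<longrightarrow> (\<exists>k::nat. \<forall>A\<in>\<A>.
      \<exists>B :: nat struc. is_struc B \<and> card (fst B) \<le> k \<and> d_opt A B \<le> ereal \<epsilon>))"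

type_synonym 'v graph = "'v set \<times> 'v set set"

definition simple_graph :: "'v graph \<Rightarrow> bool" where
  "simple_graph G \<longleftrightarrow> finite (fst G) \<and>
     (\<forall>e\<in>snd G. \<exists>u v. u \<noteq> v \<and> u \<in> fst G \<and> v \<in> fst G \<and> e = {u, v})"

definition avg_degree :: "'v graph \<Rightarrow> real" where
  "avg_degree G = 2 * real (card (snd G)) / real (card (fst G))"

definition is_cycle :: "'v graph \<Rightarrow> 'v list \<Rightarrow> bool" where
  "is_cycle G cs \<longleftrightarrow> length cs \<ge> 3 \<and> distinct cs \<and> set cs \<subseteq> fst G \<and>
     (\<forall>i < length cs. {cs ! i, cs ! ((i + 1) mod length cs)} \<in> snd G)"

definition girth_ge :: "'v graph \<Rightarrow> nat \<Rightarrow> bool" where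
  "girth_ge G g \<longleftrightarrow> (\<forall>cs. is_cycle G cs \<longrightarrow> length cs \<ge> g)"

text \<open>An (unweighted) orientation of G, viewed as a structure: domain V,
  e(u,v) = 1 iff u -> v is an arc, each edge oriented in exactly one way.\<close>
definition is_orientation :: "'v graph \<Rightarrow> ('v \<Rightarrow> 'v \<Rightarrow> real) \<Rightarrow> bool" where
  "is_orientation G e \<longleftrightarrow>
     (\<forall>u v. e u v \<in> {0, 1}) \<and>
     (\<forall>u v. e u v = 1 \<longrightarrow> {u, v} \<in> snd G) \<and>
     (\<forall>u v. {u, v} \<in> snd G \<longrightarrow> (e u v = 1 \<longleftrightarrow> e v u = 0))"

definition orientations :: "'v graph set \<Rightarrow> 'v struc set" where
  "orientations \<G> = {(fst G, e) | G e. G \<in> \<G> \<and> is_orientation G e}"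

end

theory Submission
  imports Defs "HOL-Library.FuncSet" "HOL-Library.Countable_Set"
begin

text \<open>Orient G at random. A balanced orientation of an edge set (one admitting a level
  function h : V \<rightarrow> \<int> that rises by one along every arc) is determined by its restriction to a
  spanning forest, so there are at most 2^|V| of them, whereas |E| \<ge> (1 + \<delta>/2) |V|. A union
  bound then yields an orientation A of G for which every level function climbs along at most
  (1 - \<eta>) |E| arcs. Hence opt(A, A) \<ge> |E| while opt(A, P) \<le> (1 - \<eta>) |E| for every directed
  path P. On the other hand, once the girth of G exceeds k, the image of a structure B on at most
  k points spans a forest, on which A has a level function with values in [-k, k]; composing
  with it gives opt(B, A) \<le> opt(B, P) for the path P on 2k + 1 points. Comparing the two tests
  shows that d_opt(A, B) \<ge> -ln(1 - \<eta>) / 3 for every such B.\<close>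

section \<open>Values of maps between structures\<close>

definition map_value :: "'a struc \<Rightarrow> 'b struc \<Rightarrow> ('a \<Rightarrow> 'b) \<Rightarrow> real" where
  "map_value S T h = (\<Sum>x\<in>fst S. \<Sum>y\<in>fst S. snd S x y * snd T (h x) (h y))"

lemma opt_eq_Max_map_value: "opt S T = Max {map_value S T h | h. h ` fst S \<subseteq> fst T}"
  unfolding opt_def map_value_def ..

lemma map_value_restrict: "map_value S T (restrict h (fst S)) = map_value S T h"
  unfolding map_value_def by (intro sum.cong refl) simp_all

lemma finite_map_values:
  assumes "finite (fst S)" "finite (fst T)"
  shows "finite {map_value S T h | h. h ` fst S \<subseteq> fst T}"
proof (rule finite_subset)
  show "{map_value S T h | h. h ` fst S \<subseteq> fst T} \<subseteq> map_value S T ` (fst S \<rightarrow>\<^sub>E fst T)"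
  proof
    fix v assume "v \<in> {map_value S T h | h. h ` fst S \<subseteq> fst T}"
    then obtain h where "h ` fst S \<subseteq> fst T" "v = map_value S T h" by blast
    then show "v \<in> map_value S T ` (fst S \<rightarrow>\<^sub>E fst T)"
      by (intro image_eqI[of _ _ "restrict h (fst S)"]) (auto simp: map_value_restrict)
  qed
  show "finite (map_value S T ` (fst S \<rightarrow>\<^sub>E fst T))"
    using assms by (simp add: finite_PiE)
qed

lemma map_value_le_opt:
  assumes "finite (fst S)" "finite (fst T)" "h ` fst S \<subseteq> fst T"
  shows "map_value S T h \<le> opt S T"
  unfolding opt_eq_Max_map_value using assms by (intro Max_ge finite_map_values) auto

lemma opt_attained:
  assumes "finite (fst S)" "finite (fst T)" "fst T \<noteq> {}"
  obtains h where "h ` fst S \<subseteq> fst T" "opt S T = map_value S T h"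
proof -
  obtain t where "t \<in> fst T" using assms(3) by blast
  then have "map_value S T (\<lambda>_. t) \<in> {map_value S T h | h. h ` fst S \<subseteq> fst T}" by auto
  then have "opt S T \<in> {map_value S T h | h. h ` fst S \<subseteq> fst T}"
    unfolding opt_eq_Max_map_value using assms by (intro Max_in finite_map_values) auto
  then show thesis using that by blast
qed

lemma map_value_nonneg:
  assumes "is_struc S" "is_struc T"
  shows "0 \<le> map_value S T h"
  using assms unfolding map_value_def is_struc_def by (intro sum_nonneg mult_nonneg_nonneg) auto

lemma opt_nonneg:
  assumes "is_struc S" "is_struc T"
  shows "0 \<le> opt S T"
proof -
  obtain h where "opt S T = map_value S T h"
    using assms opt_attained unfolding is_struc_def by metis
  then show ?thesis using map_value_nonneg[OF assms] by simp
qed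

lemma opt_mono:
  assumes S: "is_struc S" and T: "is_struc T" and "finite (fst T')"
    and f: "f ` fst T \<subseteq> fst T'"
    and dom: "\<And>x y. x \<in> fst T \<Longrightarrow> y \<in> fst T \<Longrightarrow> snd T x y \<le> snd T' (f x) (f y)"
  shows "opt S T \<le> opt S T'"
proof -
  obtain h where h: "h ` fst S \<subseteq> fst T" and opt: "opt S T = map_value S T h"
    using opt_attained S T unfolding is_struc_def by metis
  have "map_value S T h \<le> map_value S T' (f \<circ> h)"
    unfolding map_value_def using S h dom unfolding is_struc_def
    by (intro sum_mono mult_left_mono) (auto simp: image_subset_iff)
  also have "\<dots> \<le> opt S T'"
    using S h f \<open>finite (fst T')\<close> unfolding is_struc_def
    by (intro map_value_le_opt) (auto simp: image_subset_iff)
  finally show ?thesis using opt by simp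
qed

definition nat_copy :: "'a struc \<Rightarrow> nat struc" where
  "nat_copy A = (to_nat_on (fst A) ` fst A,
                 \<lambda>i j. snd A (from_nat_into (fst A) i) (from_nat_into (fst A) j))"

lemma is_struc_nat_copy: "is_struc A \<Longrightarrow> is_struc (nat_copy A)"
  unfolding is_struc_def nat_copy_def by auto

lemma opt_nat_copy:
  assumes S: "is_struc S" and A: "is_struc A"
  shows "opt S (nat_copy A) = opt S A"
proof (rule antisym)
  have cA: "countable (fst A)" using A unfolding is_struc_def by (simp add: countable_finite)
  show "opt S (nat_copy A) \<le> opt S A"
    using cA A by (intro opt_mono[OF S is_struc_nat_copy[OF A], of _ "from_nat_into (fst A)"])
      (auto simp: nat_copy_def is_struc_def)
  show "opt S A \<le> opt S (nat_copy A)"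
    using cA A by (intro opt_mono[OF S A, of _ "to_nat_on (fst A)"])
      (auto simp: nat_copy_def is_struc_def)
qed

lemma ln_dist_le_d_opt: "is_struc (C :: nat struc) \<Longrightarrow> ln_dist (opt A C) (opt B C) \<le> d_opt A B"
  unfolding d_opt_def by (rule SUP_upper) simp

lemma ln_dist_commute: "ln_dist a b = ln_dist b a"
  unfolding ln_dist_def by (auto simp: abs_minus_commute)

lemma le_exp_mult_of_ln_dist_le:
  assumes "ln_dist a b \<le> ereal \<epsilon>" "0 < a" "0 \<le> b"
  shows "a \<le> exp \<epsilon> * b"
proof -
  have "0 < b" using assms unfolding ln_dist_def by (cases "b = 0") auto
  then have "ln a \<le> \<epsilon> + ln b" using assms unfolding ln_dist_def by auto
  then have "exp (ln a) \<le> exp (\<epsilon> + ln b)" by simp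
  then show ?thesis using \<open>0 < a\<close> \<open>0 < b\<close> by (simp add: exp_add)
qed

section \<open>Level functions on forests\<close>

lemma simple_graph_edge_neq:
  assumes "simple_graph G" "{x, y} \<in> snd G"
  shows "x \<noteq> y"
  using assms unfolding simple_graph_def by (metis doubleton_eq_iff insert_absorb2)

lemma simple_graph_edge_vertices:
  assumes "simple_graph G" "{x, y} \<in> snd G"
  shows "x \<in> fst G" "y \<in> fst G"
  using assms unfolding simple_graph_def by (auto simp: doubleton_eq_iff)

lemma card_edge:
  assumes "simple_graph G" "ed \<in> snd G"
  shows "card ed = 2"
proof -
  obtain u v where "u \<noteq> v" "ed = {u, v}" using assms unfolding simple_graph_def by blast
  then show ?thesis by simp
qed

lemma finite_edges:
  assumes "simple_graph G"
  shows "finite (snd G)"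
proof (rule finite_subset)
  show "snd G \<subseteq> Pow (fst G)"
  proof
    fix ed assume "ed \<in> snd G"
    then obtain u v where "u \<in> fst G" "v \<in> fst G" "ed = {u, v}"
      using assms unfolding simple_graph_def by blast
    then show "ed \<in> Pow (fst G)" by simp
  qed
  show "finite (Pow (fst G))" using assms unfolding simple_graph_def by simp
qed

lemma simple_graph_subset: "simple_graph G \<Longrightarrow> M \<subseteq> snd G \<Longrightarrow> simple_graph (fst G, M)"
  unfolding simple_graph_def by auto

lemma orientation_01: "is_orientation G e \<Longrightarrow> e x y = 0 \<or> e x y = 1"
  unfolding is_orientation_def by blast

lemma orientation_arcD:
  assumes "is_orientation G e" "e x y = 1"
  shows "{x, y} \<in> snd G" "e y x = 0"
  using assms unfolding is_orientation_def by blast+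

lemma first_repetition:
  fixes w :: "nat \<Rightarrow> 'a"
  assumes "finite S" "\<And>n. w n \<in> S"
  obtains i j where "i < j" "w i = w j" "\<And>a b. a < b \<Longrightarrow> b < j \<Longrightarrow> w a \<noteq> w b"
proof -
  have "\<not> inj w"
    using finite_subset[of "range w" S] range_inj_infinite[of w] assms by blast
  then have "\<exists>j. \<exists>i<j. w i = w j"
    unfolding inj_def by (metis linorder_neqE_nat)
  define j where "j = (LEAST j. \<exists>i<j. w i = w j)"
  obtain i where "i < j" "w i = w j"
    using LeastI_ex[OF \<open>\<exists>j. \<exists>i<j. w i = w j\<close>] unfolding j_def by blast
  moreover have "w a \<noteq> w b" if "a < b" "b < j" for a b
    using Least_le[of "\<lambda>j. \<exists>i<j. w i = w j" b] that unfolding j_def by fastforce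
  ultimately show thesis by (rule that)
qed

lemma cycle_of_nonbacktracking_walk:
  assumes sg: "simple_graph G" and "finite S" and walk_in: "\<And>n. w n \<in> S"
    and walk_step: "\<And>n. {w n, w (Suc n)} \<in> snd G"
    and no_return: "\<And>n. w (Suc (Suc n)) \<noteq> w n"
  obtains cs where "is_cycle G cs" "set cs \<subseteq> S"
proof -
  obtain i J where "i < J" "w i = w J" and distinct_before: "\<And>a b. a < b \<Longrightarrow> b < J \<Longrightarrow> w a \<noteq> w b"
    using first_repetition[of S w, OF \<open>finite S\<close> walk_in] by blast
  define cs where "cs = map w [i..<J]"
  have len: "length cs = J - i" unfolding cs_def by simp
  have "J \<noteq> Suc i" using walk_step[of i] simple_graph_edge_neq[OF sg] \<open>w i = w J\<close> by metis
  moreover have "J \<noteq> Suc (Suc i)" using no_return[of i] \<open>w i = w J\<close> by metis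
  ultimately have "length cs \<ge> 3" using \<open>i < J\<close> len by linarith
  have succ: "cs ! ((t + 1) mod length cs) = w (Suc (i + t))" if "t < length cs" for t
  proof (cases "t + 1 < length cs")
    case True then show ?thesis unfolding cs_def by simp
  next
    case False
    then have "t + 1 = length cs" using that by simp
    then have "Suc (i + t) = J" "(t + 1) mod length cs = 0" using len \<open>i < J\<close> by auto
    then show ?thesis unfolding cs_def using \<open>i < J\<close> \<open>w i = w J\<close> by simp
  qed
  have "inj_on w {i..<J}"
  proof (rule inj_onI)
    fix a b assume "a \<in> {i..<J}" "b \<in> {i..<J}" "w a = w b"
    then show "a = b" by (cases a b rule: linorder_cases) (auto dest: distinct_before)
  qed
  then have "is_cycle G cs"
    unfolding is_cycle_def
  proof (intro conjI allI impI)
    show "set cs \<subseteq> fst G"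
      unfolding cs_def using simple_graph_edge_vertices(1)[OF sg walk_step] by auto
    show "{cs ! t, cs ! ((t + 1) mod length cs)} \<in> snd G" if "t < length cs" for t
      using succ[OF that] walk_step[of "i + t"] that len unfolding cs_def by simp
  qed (use len \<open>length cs \<ge> 3\<close> in \<open>simp_all add: cs_def distinct_map\<close>)
  moreover have "set cs \<subseteq> S" unfolding cs_def using walk_in by auto
  ultimately show thesis using that by blast
qed

text \<open>If every vertex of S had two neighbours in S, a walk that never immediately returns
  could be continued forever inside S, and it would close a cycle.\<close>
lemma acyclic_set_has_leaf:
  assumes sg: "simple_graph G" and "finite S" "S \<noteq> {}"
    and acyclic: "\<And>cs. is_cycle G cs \<Longrightarrow> \<not> set cs \<subseteq> S"
  obtains v u where "v \<in> S" "\<And>w. w \<in> S \<Longrightarrow> {v, w} \<in> snd G \<Longrightarrow> w = u"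
proof (rule ccontr)
  assume "\<not> thesis"
  note leaf = that
  have branching: "\<exists>w\<in>S. {c, w} \<in> snd G \<and> w \<noteq> p" if "c \<in> S" for c p
    using \<open>\<not> thesis\<close> leaf[OF that] by blast
  define forward where "forward p c = (SOME w. w \<in> S \<and> {c, w} \<in> snd G \<and> w \<noteq> p)" for p c
  have forward: "forward p c \<in> S \<and> {c, forward p c} \<in> snd G \<and> forward p c \<noteq> p" if "c \<in> S" for p c
    unfolding forward_def by (rule someI_ex) (use branching[OF that, of p] in blast)
  obtain a where "a \<in> S" using \<open>S \<noteq> {}\<close> by blast
  define walk where "walk n = ((\<lambda>(p, c). (c, forward p c)) ^^ n) (a, a)" for n
  have walk_Suc: "walk (Suc n) = (snd (walk n), forward (fst (walk n)) (snd (walk n)))" for n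
    unfolding walk_def by (simp add: case_prod_beta)
  have walk_in: "snd (walk n) \<in> S" for n
  proof (induction n)
    case 0 then show ?case using \<open>a \<in> S\<close> by (simp add: walk_def)
  next
    case (Suc n) then show ?case using forward by (simp add: walk_Suc)
  qed
  define w where "w n = snd (walk n)" for n
  show False
  proof (rule cycle_of_nonbacktracking_walk[OF sg \<open>finite S\<close>])
    show "w n \<in> S" for n unfolding w_def by (rule walk_in)
    show "{w n, w (Suc n)} \<in> snd G" for n unfolding w_def walk_Suc using forward walk_in by simp
    show "w (Suc (Suc n)) \<noteq> w n" for n unfolding w_def walk_Suc using forward walk_in by simp
  qed (use acyclic in blast)
qed

lemma level_function_insert_leaf:
  assumes sg: "simple_graph G" and ori: "is_orientation G e" and "v \<notin> S"
    and leaf: "\<And>w. w \<in> S \<Longrightarrow> {v, w} \<in> snd G \<Longrightarrow> w = u"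
    and bound: "\<forall>x\<in>S. \<bar>q x\<bar> \<le> b" and level: "\<forall>x\<in>S. \<forall>y\<in>S. e x y = 1 \<longrightarrow> q y = q x + 1"
    and "0 \<le> b"
  shows "\<exists>q' :: 'v \<Rightarrow> int. (\<forall>x\<in>insert v S. \<bar>q' x\<bar> \<le> b + 1) \<and>
           (\<forall>x\<in>insert v S. \<forall>y\<in>insert v S. e x y = 1 \<longrightarrow> q' y = q' x + 1)"
proof -
  define q' where "q' = q(v := if u \<in> S \<and> e u v = 1 then q u + 1
                              else if u \<in> S \<and> e v u = 1 then q u - 1 else 0)"
  have arc_neq: "x \<noteq> y" if "e x y = 1" for x y
    using simple_graph_edge_neq[OF sg orientation_arcD(1)[OF ori that]] .
  have arc_from_v: "y = u" if "y \<in> S" "e v y = 1" for y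
    using leaf[OF that(1) orientation_arcD(1)[OF ori that(2)]] .
  have arc_to_v: "x = u" if "x \<in> S" "e x v = 1" for x
    using leaf[OF that(1)] orientation_arcD(1)[OF ori that(2)] by (simp add: insert_commute)
  have "\<bar>q' x\<bar> \<le> b + 1" if "x \<in> insert v S" for x
  proof (cases "x = v")
    case True
    have "u \<in> S \<Longrightarrow> \<bar>q u\<bar> \<le> b" using bound by blast
    then show ?thesis using True \<open>0 \<le> b\<close> by (auto simp: q'_def abs_le_iff)
  next
    case False
    then show ?thesis using that bound \<open>v \<notin> S\<close> by (auto simp: q'_def)
  qed
  moreover have "q' y = q' x + 1" if xy: "x \<in> insert v S" "y \<in> insert v S" "e x y = 1" for x y
  proof -
    consider "x = v" | "y = v" | "x \<in> S" "y \<in> S"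
      using xy by blast
    then show ?thesis
    proof cases
      case 1
      then have "y = u" "y \<in> S" "y \<noteq> v" "e u v = 0"
        using xy arc_from_v arc_neq orientation_arcD(2)[OF ori] by auto
      then show ?thesis using 1 xy by (simp add: q'_def)
    next
      case 2
      then have "x = u" "x \<in> S" "x \<noteq> v"
        using xy arc_to_v arc_neq by auto
      then show ?thesis using 2 xy by (simp add: q'_def)
    next
      case 3
      then show ?thesis using xy level \<open>v \<notin> S\<close> by (auto simp: q'_def)
    qed
  qed
  ultimately show ?thesis by blast
qed

lemma acyclic_orientation_has_level_function:
  assumes sg: "simple_graph G" and ori: "is_orientation G e" and "finite S"
    and "\<And>cs. is_cycle G cs \<Longrightarrow> \<not> set cs \<subseteq> S"
  shows "\<exists>q :: 'v \<Rightarrow> int. (\<forall>x\<in>S. \<bar>q x\<bar> \<le> int (card S)) \<and>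
           (\<forall>x\<in>S. \<forall>y\<in>S. e x y = 1 \<longrightarrow> q y = q x + 1)"
  using assms(3,4)
proof (induction S rule: finite_psubset_induct)
  case (psubset S)
  show ?case
  proof (cases "S = {}")
    case False
    obtain v u where "v \<in> S" and leaf: "\<And>w. w \<in> S \<Longrightarrow> {v, w} \<in> snd G \<Longrightarrow> w = u"
      using acyclic_set_has_leaf[OF sg psubset.hyps False psubset.prems] by blast
    obtain q where "\<forall>x\<in>S - {v}. \<bar>q x\<bar> \<le> int (card (S - {v}))"
      "\<forall>x\<in>S - {v}. \<forall>y\<in>S - {v}. e x y = 1 \<longrightarrow> q y = q x + 1"
      using psubset.IH[of "S - {v}"] psubset.prems \<open>v \<in> S\<close> by blast
    moreover have "\<And>w. w \<in> S - {v} \<Longrightarrow> {v, w} \<in> snd G \<Longrightarrow> w = u" using leaf by blast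
    ultimately have "\<exists>q'. (\<forall>x\<in>insert v (S - {v}). \<bar>q' x\<bar> \<le> int (card (S - {v})) + 1) \<and>
        (\<forall>x\<in>insert v (S - {v}). \<forall>y\<in>insert v (S - {v}). e x y = 1 \<longrightarrow> q' y = q' x + 1)"
      by (intro level_function_insert_leaf[OF sg ori]) auto
    moreover have "insert v (S - {v}) = S" using \<open>v \<in> S\<close> by blast
    moreover have "card S > 0" using \<open>v \<in> S\<close> psubset.hyps by (auto simp: card_gt_0_iff)
    then have "int (card (S - {v})) + 1 = int (card S)" using \<open>v \<in> S\<close> by simp
    ultimately show ?thesis by (simp only:)
  qed simp
qed

section \<open>Counting balanced orientations\<close>

text \<open>An orientation of an edge set M is encoded by the head d ed \<in> ed it picks on every edge ed.
  It is balanced if it has a level function h, rising by one along every arc.\<close>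
definition ascends :: "('v \<Rightarrow> int) \<Rightarrow> ('v set \<Rightarrow> 'v) \<Rightarrow> 'v set \<Rightarrow> bool" where
  "ascends h d ed \<longleftrightarrow> (\<forall>x\<in>ed. x \<noteq> d ed \<longrightarrow> h (d ed) = h x + 1)"

definition balanced_orientations :: "'v set set \<Rightarrow> ('v set \<Rightarrow> 'v) set" where
  "balanced_orientations M = {d \<in> (\<Pi>\<^sub>E ed\<in>M. ed). \<exists>h. \<forall>ed\<in>M. ascends h d ed}"

definition edge_rel :: "'v set set \<Rightarrow> ('v \<times> 'v) set" where
  "edge_rel M = {(x, y). {x, y} \<in> M}"

definition component_rel :: "'v set \<Rightarrow> 'v set set \<Rightarrow> ('v \<times> 'v) set" where
  "component_rel V M = Restr ((edge_rel M)\<^sup>*) V"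

lemma equiv_component_rel: "equiv V (component_rel V M)"
proof -
  have "sym ((edge_rel M)\<^sup>*)"
    by (rule sym_rtrancl) (auto simp: sym_def edge_rel_def insert_commute)
  then show ?thesis
    unfolding component_rel_def equiv_def refl_on_def sym_def trans_def
    by (blast intro: rtrancl_trans)
qed

lemma component_rel_mono: "M \<subseteq> M' \<Longrightarrow> component_rel V M \<subseteq> component_rel V M'"
  unfolding component_rel_def edge_rel_def by (auto elim!: rtrancl_mono[THEN subsetD, rotated])

lemma quotient_eq_image: "V // R = (\<lambda>x. R `` {x}) ` V"
  unfolding quotient_def by auto

lemma card_quotient_le: "finite V \<Longrightarrow> card (V // R) \<le> card V"
  unfolding quotient_eq_image by (rule card_image_le)

lemma Image_class_coarsening:
  assumes "equiv V R" "equiv V R'" "R \<subseteq> R'" "x \<in> V"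
  shows "R' `` (R `` {x}) = R' `` {x}"
proof
  show "R' `` (R `` {x}) \<subseteq> R' `` {x}"
    using assms(2,3) unfolding equiv_def trans_def by blast
  show "R' `` {x} \<subseteq> R' `` (R `` {x})"
    using equiv_class_self[OF assms(1,4)] by blast
qed

lemma quotient_coarsening:
  assumes "equiv V R" "equiv V R'" "R \<subseteq> R'"
  shows "(\<lambda>X. R' `` X) ` (V // R) = V // R'"
  unfolding quotient_eq_image image_image
  using Image_class_coarsening[OF assms] by (rule image_cong[OF refl])

lemma card_quotient_antimono:
  assumes "finite V" "equiv V R" "equiv V R'" "R \<subseteq> R'"
  shows "card (V // R') \<le> card (V // R)"
  unfolding quotient_coarsening[OF assms(2-4), symmetric]
  using \<open>finite V\<close> by (intro card_image_le) (simp add: quotient_eq_image)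

lemma card_quotient_strict_antimono:
  assumes "finite V" "equiv V R" "equiv V R'" "R \<subseteq> R'" "(a, b) \<in> R'" "(a, b) \<notin> R"
  shows "card (V // R') < card (V // R)"
proof -
  have "a \<in> V" "b \<in> V" using equiv_type[OF assms(3)] assms(5) by auto
  have distinct: "R `` {a} \<noteq> R `` {b}"
    using equiv_class_eq_iff[OF assms(2)] \<open>a \<in> V\<close> \<open>b \<in> V\<close> assms(6) by blast
  have merged: "R' `` (R `` {a}) = R' `` (R `` {b})"
    using Image_class_coarsening[OF assms(2-4)] \<open>a \<in> V\<close> \<open>b \<in> V\<close>
      equiv_class_eq_iff[OF assms(3)] assms(5) by simp
  have "\<not> inj_on (\<lambda>X. R' `` X) (V // R)"
  proof
    assume "inj_on (\<lambda>X. R' `` X) (V // R)"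
    from inj_onD[OF this merged quotientI quotientI] distinct \<open>a \<in> V\<close> \<open>b \<in> V\<close>
    show False by blast
  qed
  moreover have "finite (V // R)" using \<open>finite V\<close> by (simp add: quotient_eq_image)
  ultimately have "card ((\<lambda>X. R' `` X) ` (V // R)) < card (V // R)"
    using card_image_le inj_on_iff_eq_card le_neq_implies_less by metis
  then show ?thesis unfolding quotient_coarsening[OF assms(2-4)] .
qed

lemma mem_balanced_orientations:
  "d \<in> balanced_orientations M \<longleftrightarrow> d \<in> (\<Pi>\<^sub>E ed\<in>M. ed) \<and> (\<exists>h. \<forall>ed\<in>M. ascends h d ed)"
  unfolding balanced_orientations_def by simp

lemma balanced_orientation_head: "d \<in> balanced_orientations M \<Longrightarrow> ed \<in> M \<Longrightarrow> d ed \<in> ed"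
  unfolding mem_balanced_orientations by (simp add: PiE_iff)

lemma balanced_orientations_restrict:
  assumes "d \<in> balanced_orientations (insert e M)"
  shows "restrict d M \<in> balanced_orientations M"
proof -
  obtain h where d: "d \<in> (\<Pi>\<^sub>E ed\<in>insert e M. ed)" and h: "\<forall>ed\<in>insert e M. ascends h d ed"
    using assms unfolding balanced_orientations_def by blast
  have "restrict d M \<in> (\<Pi>\<^sub>E ed\<in>M. ed)" using d by auto
  moreover have "\<forall>ed\<in>M. ascends h (restrict d M) ed" using h unfolding ascends_def by simp
  ultimately show ?thesis unfolding balanced_orientations_def by blast
qed

lemma balanced_orientations_eqI:
  assumes "d1 \<in> balanced_orientations (insert e M)" "d2 \<in> balanced_orientations (insert e M)"
    and "\<And>ed. ed \<in> M \<Longrightarrow> d1 ed = d2 ed" "d1 e = d2 e"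
  shows "d1 = d2"
  using assms unfolding balanced_orientations_def by (auto intro: PiE_ext)

lemma finite_balanced_orientations:
  assumes "simple_graph (V, M)"
  shows "finite (balanced_orientations M)"
proof (rule finite_subset)
  show "balanced_orientations M \<subseteq> (\<Pi>\<^sub>E ed\<in>M. ed)" unfolding balanced_orientations_def by blast
  show "finite (\<Pi>\<^sub>E ed\<in>M. ed)"
    using finite_edges[OF assms] card_edge[OF assms]
    by (intro finite_PiE) (auto intro: card_ge_0_finite)
qed

lemma level_functions_differ_by_constant:
  assumes "\<And>ed. ed \<in> M \<Longrightarrow> d ed \<in> ed \<and> ascends h1 d ed \<and> ascends h2 d ed"
    and "(u, v) \<in> (edge_rel M)\<^sup>*"
  shows "h1 u - h2 u = h1 v - h2 v"
  using assms(2)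
proof (induction rule: rtrancl_induct)
  case (step y z)
  have "{y, z} \<in> M" using step.hyps(2) unfolding edge_rel_def by simp
  then have "h1 y - h2 y = h1 z - h2 z"
    using assms(1)[of "{y, z}"] unfolding ascends_def by (cases "y = z") auto
  then show ?case using step.IH by simp
qed simp

lemma balanced_orientations_agree_on_connected_edge:
  assumes d1: "d1 \<in> balanced_orientations (insert {u, v} M)"
    and d2: "d2 \<in> balanced_orientations (insert {u, v} M)"
    and agree: "\<And>ed. ed \<in> M \<Longrightarrow> d1 ed = d2 ed" and "(u, v) \<in> (edge_rel M)\<^sup>*"
  shows "d1 {u, v} = d2 {u, v}"
proof (rule ccontr)
  assume differ: "d1 {u, v} \<noteq> d2 {u, v}"
  obtain h1 where h1: "\<forall>ed\<in>insert {u, v} M. ascends h1 d1 ed"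
    using d1 unfolding mem_balanced_orientations by blast
  obtain h2 where h2: "\<forall>ed\<in>insert {u, v} M. ascends h2 d2 ed"
    using d2 unfolding mem_balanced_orientations by blast
  have heads: "d1 ed \<in> ed" "d2 ed \<in> ed" if "ed \<in> insert {u, v} M" for ed
    using balanced_orientation_head d1 d2 that by blast+
  have "ascends h2 d1 ed" if "ed \<in> M" for ed
    using h2 that agree[OF that] unfolding ascends_def by simp
  then have "h1 u - h2 u = h1 v - h2 v"
    using h1 heads \<open>(u, v) \<in> (edge_rel M)\<^sup>*\<close>
    by (intro level_functions_differ_by_constant[where d = d1]) auto
  moreover have "d1 {u, v} = u \<and> d2 {u, v} = v \<or> d1 {u, v} = v \<and> d2 {u, v} = u" "u \<noteq> v"
    using heads[of "{u, v}"] differ by auto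
  ultimately show False using h1 h2 unfolding ascends_def by auto
qed

lemma card_balanced_orientations_insert_le:
  assumes "simple_graph (V, M)" "finite e"
  shows "card (balanced_orientations (insert e M)) \<le> card (balanced_orientations M) * card e"
proof -
  have "card (balanced_orientations (insert e M)) \<le> card (balanced_orientations M \<times> e)"
  proof (rule card_inj_on_le)
    show "inj_on (\<lambda>d. (restrict d M, d e)) (balanced_orientations (insert e M))"
    proof (rule inj_onI)
      fix d1 d2
      assume d: "d1 \<in> balanced_orientations (insert e M)" "d2 \<in> balanced_orientations (insert e M)"
        and eq: "(restrict d1 M, d1 e) = (restrict d2 M, d2 e)"
      have "d1 ed = d2 ed" if "ed \<in> M" for ed
        using that eq by (metis prod.inject restrict_apply')
      then show "d1 = d2" using balanced_orientations_eqI[OF d] eq by simp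
    qed
    show "(\<lambda>d. (restrict d M, d e)) ` balanced_orientations (insert e M)
            \<subseteq> balanced_orientations M \<times> e"
      using balanced_orientations_restrict balanced_orientation_head by blast
    show "finite (balanced_orientations M \<times> e)"
      using finite_balanced_orientations[OF assms(1)] assms(2) by simp
  qed
  then show ?thesis by (simp add: card_cartesian_product)
qed

lemma card_balanced_orientations_insert_connected_le:
  assumes "simple_graph (V, M)" "(u, v) \<in> (edge_rel M)\<^sup>*"
  shows "card (balanced_orientations (insert {u, v} M)) \<le> card (balanced_orientations M)"
proof (rule card_inj_on_le)
  show "inj_on (\<lambda>d. restrict d M) (balanced_orientations (insert {u, v} M))"
  proof (rule inj_onI)
    fix d1 d2
    assume d: "d1 \<in> balanced_orientations (insert {u, v} M)"
      "d2 \<in> balanced_orientations (insert {u, v} M)"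
      and "restrict d1 M = restrict d2 M"
    then have agree: "d1 ed = d2 ed" if "ed \<in> M" for ed
      using that by (metis restrict_apply')
    show "d1 = d2"
      using balanced_orientations_eqI[OF d agree]
        balanced_orientations_agree_on_connected_edge[OF d agree assms(2)] by blast
  qed
  show "(\<lambda>d. restrict d M) ` balanced_orientations (insert {u, v} M) \<subseteq> balanced_orientations M"
    using balanced_orientations_restrict by blast
  show "finite (balanced_orientations M)" by (rule finite_balanced_orientations[OF assms(1)])
qed

text \<open>An edge inside a component of M has a forced direction; an edge joining two components
  leaves two choices but lowers the number of components.\<close>
lemma card_balanced_orientations_insert_edge:
  assumes sg: "simple_graph (V, insert e M)"
    and IH: "card (balanced_orientations M) \<le> 2 ^ (card V - card (V // component_rel V M))"
  shows "card (balanced_orientations (insert e M))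
           \<le> 2 ^ (card V - card (V // component_rel V (insert e M)))"
proof -
  obtain u v where uv: "u \<noteq> v" "u \<in> V" "v \<in> V" "e = {u, v}"
    using sg unfolding simple_graph_def by auto
  have M: "simple_graph (V, M)" and "finite V" using sg unfolding simple_graph_def by simp_all
  define c where "c = card (V // component_rel V M)"
  define c' where "c' = card (V // component_rel V (insert e M))"
  have "c' \<le> c"
    unfolding c_def c'_def
    using \<open>finite V\<close> equiv_component_rel component_rel_mono[of M "insert e M"]
    by (intro card_quotient_antimono) auto
  have "c \<le> card V" unfolding c_def using \<open>finite V\<close> by (rule card_quotient_le)
  show ?thesis
  proof (cases "(u, v) \<in> (edge_rel M)\<^sup>*")
    case True
    have "card (balanced_orientations (insert e M)) \<le> card (balanced_orientations M)"
      unfolding uv(4) by (rule card_balanced_orientations_insert_connected_le[OF M True])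
    also have "\<dots> \<le> 2 ^ (card V - c)" using IH unfolding c_def .
    also have "\<dots> \<le> 2 ^ (card V - c')" using \<open>c' \<le> c\<close> by (intro power_increasing) auto
    finally show ?thesis unfolding c'_def .
  next
    case False
    have "(u, v) \<in> component_rel V (insert e M)"
      using uv unfolding component_rel_def edge_rel_def by auto
    moreover have "(u, v) \<notin> component_rel V M"
      using False unfolding component_rel_def by blast
    ultimately have "c' < c"
      unfolding c_def c'_def using \<open>finite V\<close>
      by (intro card_quotient_strict_antimono equiv_component_rel component_rel_mono) auto
    have "card (balanced_orientations (insert e M)) \<le> card (balanced_orientations M) * card e"
      by (rule card_balanced_orientations_insert_le[OF M]) (simp add: uv)
    also have "\<dots> \<le> 2 ^ Suc (card V - c)" using IH uv unfolding c_def by simp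
    also have "\<dots> \<le> 2 ^ (card V - c')"
      using \<open>c' < c\<close> \<open>c \<le> card V\<close> by (intro power_increasing) auto
    finally show ?thesis unfolding c'_def .
  qed
qed

lemma card_balanced_orientations_le:
  assumes "simple_graph (V, M)"
  shows "card (balanced_orientations M) \<le> 2 ^ (card V - card (V // component_rel V M))"
proof -
  have "finite M" using finite_edges[OF assms] by simp
  then show ?thesis using assms
  proof (induction M rule: finite_induct)
    case empty
    have "balanced_orientations {} \<subseteq> {\<lambda>_. undefined}"
      unfolding balanced_orientations_def by auto
    from card_mono[OF _ this] have "card (balanced_orientations {}) \<le> 1" by simp
    moreover have "(1::nat) \<le> 2 ^ (card V - card (V // component_rel V {}))" by simp
    ultimately show ?case by (rule order_trans)
  next
    case (insert e M)
    then show ?case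
      using card_balanced_orientations_insert_edge simple_graph_subset[of "(V, insert e M)" M]
      by (metis fst_conv snd_conv subset_insertI)
  qed
qed

corollary card_balanced_orientations_le_pow:
  "simple_graph (V, M) \<Longrightarrow> card (balanced_orientations M) \<le> 2 ^ card V"
  using card_balanced_orientations_le[of V M] power_increasing[of _ "card V" "2::nat"]
  by (meson diff_le_self le_trans one_le_numeral)

section \<open>An orientation far from balanced\<close>

lemma card_orientations:
  assumes "finite M" "\<And>ed. ed \<in> M \<Longrightarrow> card ed = 2"
  shows "card (\<Pi>\<^sub>E ed\<in>M. ed) = 2 ^ card M"
  using card_PiE[OF assms(1), of "\<lambda>ed. ed"] assms(2) by simp

lemma card_extensions_of_balanced_le:
  assumes sg: "simple_graph (V, E)" and "M \<subseteq> E"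
  shows "card {d \<in> (\<Pi>\<^sub>E ed\<in>E. ed). restrict d M \<in> balanced_orientations M}
           \<le> 2 ^ card V * 2 ^ card (E - M)"
proof -
  have sgM: "simple_graph (V, M)" and sgEM: "simple_graph (V, E - M)"
    using simple_graph_subset[OF sg] \<open>M \<subseteq> E\<close> by (metis Diff_subset fst_conv snd_conv)+
  have "card {d \<in> (\<Pi>\<^sub>E ed\<in>E. ed). restrict d M \<in> balanced_orientations M}
          \<le> card (balanced_orientations M \<times> (\<Pi>\<^sub>E ed\<in>E - M. ed))"
  proof (rule card_inj_on_le)
    show "inj_on (\<lambda>d. (restrict d M, restrict d (E - M)))
            {d \<in> (\<Pi>\<^sub>E ed\<in>E. ed). restrict d M \<in> balanced_orientations M}"
    proof (rule inj_onI)
      fix d1 d2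
      assume d: "d1 \<in> {d \<in> (\<Pi>\<^sub>E ed\<in>E. ed). restrict d M \<in> balanced_orientations M}"
        "d2 \<in> {d \<in> (\<Pi>\<^sub>E ed\<in>E. ed). restrict d M \<in> balanced_orientations M}"
        and eq: "(restrict d1 M, restrict d1 (E - M)) = (restrict d2 M, restrict d2 (E - M))"
      have "d1 ed = d2 ed" if "ed \<in> E" for ed
        using that eq by (cases "ed \<in> M") (metis DiffI prod.inject restrict_apply')+
      then show "d1 = d2" using d by (auto intro: PiE_ext)
    qed
    show "(\<lambda>d. (restrict d M, restrict d (E - M))) `
            {d \<in> (\<Pi>\<^sub>E ed\<in>E. ed). restrict d M \<in> balanced_orientations M}
          \<subseteq> balanced_orientations M \<times> (\<Pi>\<^sub>E ed\<in>E - M. ed)"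
    proof (rule image_subsetI)
      fix d assume "d \<in> {d \<in> (\<Pi>\<^sub>E ed\<in>E. ed). restrict d M \<in> balanced_orientations M}"
      then show "(restrict d M, restrict d (E - M)) \<in> balanced_orientations M \<times> (\<Pi>\<^sub>E ed\<in>E - M. ed)"
        by (simp add: Pi_iff PiE_iff)
    qed
    show "finite (balanced_orientations M \<times> (\<Pi>\<^sub>E ed\<in>E - M. ed))"
      using finite_balanced_orientations[OF sgM] card_orientations[of "E - M"]
        finite_edges[OF sgEM] card_edge[OF sgEM]
      by (simp add: finite_PiE card_ge_0_finite)
  qed
  also have "\<dots> = card (balanced_orientations M) * 2 ^ card (E - M)"
    using card_orientations[of "E - M"] finite_edges[OF sgEM] card_edge[OF sgEM]
    by (simp add: card_cartesian_product)
  also have "\<dots> \<le> 2 ^ card V * 2 ^ card (E - M)"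
    using card_balanced_orientations_le_pow[OF sgM] by simp
  finally show ?thesis .
qed

text \<open>Exponential moments: on these M, 2^|E - M| \<le> (2/x) powr (\<eta> |E|) x^|E - M|, and the
  x^|E - M| over all M \<subseteq> E sum to (1 + x)^|E|.\<close>
lemma sum_large_subsets_le:
  fixes x \<eta> :: real
  assumes "finite E" "0 < x" "x \<le> 1"
  shows "(\<Sum>M | M \<subseteq> E \<and> (1 - \<eta>) * card E < card M. 2 ^ card (E - M))
           \<le> (2 / x) powr (\<eta> * card E) * (1 + x) ^ card E"
proof -
  let ?F = "{M. M \<subseteq> E \<and> (1 - \<eta>) * card E < card M}"
  have "(2::real) ^ card (E - M) \<le> (2 / x) powr (\<eta> * card E) * x ^ card (E - M)" if "M \<in> ?F" for M
  proof -
    have "M \<subseteq> E" using that by simp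
    then have "card (E - M) = card E - card M"
      using card_Diff_subset finite_subset \<open>finite E\<close> by blast
    then have "real (card (E - M)) \<le> \<eta> * card E"
      using that card_mono[OF \<open>finite E\<close>, of M] by (simp add: of_nat_diff algebra_simps)
    moreover have "1 \<le> 2 / x" using assms by simp
    ultimately have "(2 / x) powr card (E - M) \<le> (2 / x) powr (\<eta> * card E)"
      by (rule powr_mono)
    then have "(2 / x) ^ card (E - M) \<le> (2 / x) powr (\<eta> * card E)"
      using assms by (simp add: powr_realpow)
    then show ?thesis using assms by (simp add: power_divide field_simps)
  qed
  then have "(\<Sum>M\<in>?F. (2::real) ^ card (E - M))
               \<le> (\<Sum>M\<in>?F. (2 / x) powr (\<eta> * card E) * x ^ card (E - M))"
    by (rule sum_mono)
  also have "\<dots> = (2 / x) powr (\<eta> * card E) * (\<Sum>M\<in>?F. x ^ card (E - M))"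
    by (simp add: sum_distrib_left)
  also have "\<dots> \<le> (2 / x) powr (\<eta> * card E) * (\<Sum>M\<in>Pow E. x ^ card (E - M))"
    using assms by (intro mult_left_mono sum_mono2) auto
  also have "(\<Sum>M\<in>Pow E. x ^ card (E - M)) = (1 + x) ^ card E"
    using prod_add[OF \<open>finite E\<close>, of "\<lambda>_. 1" "\<lambda>_. x"] by simp
  finally show ?thesis .
qed

lemma balanced_on_ascending_edges:
  assumes "d \<in> (\<Pi>\<^sub>E ed\<in>E. ed)"
  shows "restrict d {ed \<in> E. ascends h d ed} \<in> balanced_orientations {ed \<in> E. ascends h d ed}"
  unfolding mem_balanced_orientations using assms
  by (auto simp: ascends_def PiE_iff intro!: exI[of _ h])

text \<open>Union bound: an orientation with a level function fitting more than (1 - \<eta>) |E| edges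
  extends a balanced orientation of a large edge set M, and there are at most 2^|V| 2^|E - M|
  of those for each M.\<close>
lemma exists_orientation_far_from_balanced:
  fixes x \<eta> :: real
  assumes sg: "simple_graph (V, E)" and "0 < x" "x \<le> 1"
    and few: "2 ^ card V * (2 / x) powr (\<eta> * card E) * (1 + x) ^ card E < 2 ^ card E"
  obtains d where "d \<in> (\<Pi>\<^sub>E ed\<in>E. ed)"
    "\<And>h. card {ed \<in> E. ascends h d ed} \<le> (1 - \<eta>) * card E"
proof (rule ccontr)
  assume no_far: "\<not> thesis"
  note far = that
  define F where "F = {M. M \<subseteq> E \<and> (1 - \<eta>) * card E < card M}"
  define X where "X M = {d \<in> (\<Pi>\<^sub>E ed\<in>E. ed). restrict d M \<in> balanced_orientations M}" for M
  have "finite E" using finite_edges[OF sg] by simp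
  have "finite F" unfolding F_def using \<open>finite E\<close> by simp
  have finite_orientations: "finite (\<Pi>\<^sub>E ed\<in>E. ed)"
    using \<open>finite E\<close> card_edge[OF sg] by (simp add: finite_PiE card_ge_0_finite)
  have cover: "(\<Pi>\<^sub>E ed\<in>E. ed) \<subseteq> (\<Union>M\<in>F. X M)"
  proof
    fix d assume d: "d \<in> (\<Pi>\<^sub>E ed\<in>E. ed)"
    then obtain h where h: "(1 - \<eta>) * card E < card {ed \<in> E. ascends h d ed}"
      using no_far far by (meson not_le)
    then have "{ed \<in> E. ascends h d ed} \<in> F" unfolding F_def by auto
    moreover have "d \<in> X {ed \<in> E. ascends h d ed}"
      unfolding X_def using d balanced_on_ascending_edges[OF d] by blast
    ultimately show "d \<in> (\<Union>M\<in>F. X M)" by blast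
  qed
  have "(2::real) ^ card E = card (\<Pi>\<^sub>E ed\<in>E. ed)"
    using card_orientations[OF \<open>finite E\<close> card_edge[OF sg]] by simp
  also have "\<dots> \<le> card (\<Union>M\<in>F. X M)"
    using cover \<open>finite F\<close> finite_orientations unfolding X_def by (simp add: card_mono)
  also have "\<dots> \<le> (\<Sum>M\<in>F. real (card (X M)))"
    using card_UN_le[OF \<open>finite F\<close>, of X] by (simp flip: of_nat_sum)
  also have "\<dots> \<le> (\<Sum>M\<in>F. 2 ^ card V * 2 ^ card (E - M))"
  proof (rule sum_mono)
    fix M assume "M \<in> F"
    then have "card (X M) \<le> 2 ^ card V * 2 ^ card (E - M)"
      unfolding X_def F_def using card_extensions_of_balanced_le[OF sg] by simp
    then have "real (card (X M)) \<le> real (2 ^ card V * 2 ^ card (E - M))"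
      by (simp only: of_nat_le_iff)
    then show "real (card (X M)) \<le> 2 ^ card V * 2 ^ card (E - M)" by simp
  qed
  also have "\<dots> = 2 ^ card V * (\<Sum>M\<in>F. 2 ^ card (E - M))"
    by (simp add: sum_distrib_left)
  also have "\<dots> \<le> 2 ^ card V * ((2 / x) powr (\<eta> * card E) * (1 + x) ^ card E)"
    using sum_large_subsets_le[OF \<open>finite E\<close> \<open>0 < x\<close> \<open>x \<le> 1\<close>, of \<eta>] unfolding F_def by simp
  finally show False using few by (simp add: mult.assoc)
qed

text \<open>In logarithms: n ln 2 \<le> (1 - \<theta>) m ln 2 for \<theta> = \<delta> / (2 + \<delta>), and each of the other two
  factors costs at most \<theta> m ln 2 / 3.\<close>
lemma counting_inequality:
  fixes \<delta> x \<eta> \<theta> :: real and n m :: nat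
  assumes "0 < \<delta>" "0 < n" "(2 + \<delta>) * n \<le> 2 * real m"
    and \<theta>: "\<theta> = \<delta> / (2 + \<delta>)" and x: "x = min 1 (\<theta> * ln 2 / 3)"
    and \<eta>: "\<eta> = \<theta> * ln 2 / (3 * ln (2 / x))"
  shows "2 ^ n * (2 / x) powr (\<eta> * m) * (1 + x) ^ m < 2 ^ m"
proof -
  have "0 < \<theta>" "\<theta> < 1" using assms(1) \<theta> by simp_all
  then have "0 < x" "x \<le> 1" using x by simp_all
  then have "ln 2 \<le> ln (2 / x)" by (simp add: field_simps)
  then have "0 < ln (2 / x)" using ln_gt_zero[of 2] by linarith
  have "0 < (2 + \<delta>) * n" using assms(1,2) by simp
  then have "0 < real m" using assms(3) by linarith
  have "real n \<le> (1 - \<theta>) * m"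
  proof -
    have "real n = ((2 + \<delta>) * n) / (2 + \<delta>)" using assms(1) by simp
    also have "\<dots> \<le> (2 * real m) / (2 + \<delta>)" using assms(1,3) by (intro divide_right_mono) auto
    also have "\<dots> = (1 - \<theta>) * m" unfolding \<theta> using assms(1) by (simp add: field_simps)
    finally show ?thesis .
  qed
  have "ln (1 + x) \<le> \<theta> * ln 2 / 3"
    using ln_add_one_self_le_self[of x] \<open>0 < x\<close> x by simp
  have "ln (2 ^ n * (2 / x) powr (\<eta> * m) * (1 + x) ^ m)
          = n * ln 2 + \<eta> * m * ln (2 / x) + m * ln (1 + x)"
    using \<open>0 < x\<close> by (simp add: ln_mult ln_realpow ln_powr)
  also have "\<eta> * m * ln (2 / x) = m * (\<theta> * ln 2 / 3)"
    using \<eta> \<open>0 < ln (2 / x)\<close> by (simp add: field_simps)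
  also have "n * ln 2 + m * (\<theta> * ln 2 / 3) + m * ln (1 + x)
               \<le> (1 - \<theta>) * m * ln 2 + m * (\<theta> * ln 2 / 3) + m * (\<theta> * ln 2 / 3)"
    using \<open>real n \<le> (1 - \<theta>) * m\<close> \<open>ln (1 + x) \<le> \<theta> * ln 2 / 3\<close> \<open>0 < real m\<close>
    by (intro add_mono mult_right_mono mult_left_mono) auto
  also have "\<dots> < m * ln 2" using \<open>0 < real m\<close> \<open>0 < \<theta>\<close> by (simp add: algebra_simps)
  also have "\<dots> = ln (2 ^ m)" by (simp add: ln_realpow)
  finally have "ln (2 ^ n * (2 / x) powr (\<eta> * m) * (1 + x) ^ m) < ln (2 ^ m)" .
  moreover have "0 < 2 ^ n * (2 / x) powr (\<eta> * m) * (1 + x) ^ m" using \<open>0 < x\<close> by simp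
  moreover have "(0::real) < 2 ^ m" by simp
  ultimately show ?thesis using ln_less_cancel_iff by blast
qed

lemma exists_counting_parameters:
  fixes \<delta> :: real
  assumes "0 < \<delta>"
  obtains \<eta> x :: real where "0 < \<eta>" "\<eta> < 1" "0 < x" "x \<le> 1"
    "\<And>n m :: nat. 0 < n \<Longrightarrow> (2 + \<delta>) * n \<le> 2 * real m \<Longrightarrow>
       2 ^ n * (2 / x) powr (\<eta> * m) * (1 + x) ^ m < 2 ^ m"
proof -
  define \<theta> where "\<theta> = \<delta> / (2 + \<delta>)"
  define x where "x = min 1 (\<theta> * ln 2 / 3)"
  define \<eta> where "\<eta> = \<theta> * ln 2 / (3 * ln (2 / x))"
  have "0 < \<theta>" "\<theta> < 1" using assms \<theta>_def by simp_all
  then have "0 < x" "x \<le> 1" using x_def by simp_all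
  then have "ln 2 \<le> ln (2 / x)" by (simp add: field_simps)
  moreover have "0 < ln (2::real)" by simp
  ultimately have "0 < ln (2 / x)" by linarith
  then have "0 < \<eta>" unfolding \<eta>_def using \<open>0 < \<theta>\<close> by simp
  have "\<eta> \<le> \<theta> * ln 2 / (3 * ln 2)"
    unfolding \<eta>_def using \<open>ln 2 \<le> ln (2 / x)\<close> \<open>0 < \<theta>\<close> \<open>0 < ln (2 / x)\<close>
    by (intro divide_left_mono) auto
  then have "\<eta> < 1" using \<open>\<theta> < 1\<close> by simp
  show thesis
    by (rule that[OF \<open>0 < \<eta>\<close> \<open>\<eta> < 1\<close> \<open>0 < x\<close> \<open>x \<le> 1\<close>
          counting_inequality[OF assms _ _ \<theta>_def x_def \<eta>_def]])
qed

section \<open>Separating the orientation from small structures\<close>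

definition orient_by :: "('v set \<Rightarrow> 'v) \<Rightarrow> 'v set set \<Rightarrow> 'v \<Rightarrow> 'v \<Rightarrow> real" where
  "orient_by d E u v = (if {u, v} \<in> E \<and> d {u, v} = v then 1 else 0)"

lemma is_orientation_orient_by:
  assumes sg: "simple_graph (V, E)" and d: "d \<in> (\<Pi>\<^sub>E ed\<in>E. ed)"
  shows "is_orientation (V, E) (orient_by d E)"
  unfolding is_orientation_def
proof (intro conjI allI impI)
  fix u v assume "{u, v} \<in> snd (V, E)"
  moreover have "d {u, v} \<in> {u, v}" if "{u, v} \<in> E" using PiE_mem[OF d that] .
  moreover have "u \<noteq> v" if "{u, v} \<in> E" using simple_graph_edge_neq[OF sg] that by simp
  ultimately show "(orient_by d E u v = 1) = (orient_by d E v u = 0)"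
    by (auto simp: orient_by_def insert_commute)
qed (auto simp: orient_by_def split: if_splits)

lemma is_struc_orient_by: "finite V \<Longrightarrow> V \<noteq> {} \<Longrightarrow> is_struc (V, orient_by d E)"
  unfolding is_struc_def orient_by_def by auto

definition dipath :: "nat \<Rightarrow> nat struc" where
  "dipath N = ({..<N}, \<lambda>i j. if j = Suc i then 1 else 0)"

lemma is_struc_dipath: "0 < N \<Longrightarrow> is_struc (dipath N)"
  unfolding is_struc_def dipath_def by auto

lemma double_sum_indicator_eq_card:
  "finite V \<Longrightarrow> (\<Sum>x\<in>V. \<Sum>y\<in>V. if P x y then 1 else 0) = real (card {(x, y) \<in> V \<times> V. P x y})"
  by (simp add: sum.cartesian_product[symmetric] sum.If_cases case_prod_beta
      Collect_case_prod_Sigma Int_def)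

lemma card_edges_le_opt_self:
  assumes sg: "simple_graph (V, E)" and d: "d \<in> (\<Pi>\<^sub>E ed\<in>E. ed)"
  shows "real (card E) \<le> opt (V, orient_by d E) (V, orient_by d E)"
proof -
  define arcs where "arcs = {(x, y) \<in> V \<times> V. {x, y} \<in> E \<and> d {x, y} = y}"
  have "finite V" using sg unfolding simple_graph_def by simp
  have "E \<subseteq> (\<lambda>(x, y). {x, y}) ` arcs"
  proof
    fix ed assume "ed \<in> E"
    then obtain u v where uv: "u \<in> V" "v \<in> V" "ed = {u, v}"
      using sg unfolding simple_graph_def by auto
    have "d ed \<in> ed" using PiE_mem[OF d \<open>ed \<in> E\<close>] .
    then have "(u, v) \<in> arcs \<or> (v, u) \<in> arcs"
      using \<open>ed \<in> E\<close> uv unfolding arcs_def by (auto simp: insert_commute)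
    then show "ed \<in> (\<lambda>(x, y). {x, y}) ` arcs"
      using uv by (auto simp: insert_commute intro: rev_image_eqI)
  qed
  moreover have "finite arcs"
    using finite_subset[of arcs "V \<times> V"] \<open>finite V\<close> by (auto simp: arcs_def)
  ultimately have "card E \<le> card arcs"
    by (meson card_image_le card_mono finite_imageI le_trans)
  also have "real (card arcs) = (\<Sum>x\<in>V. \<Sum>y\<in>V. if {x, y} \<in> E \<and> d {x, y} = y then 1 else 0)"
    unfolding arcs_def by (rule double_sum_indicator_eq_card[OF \<open>finite V\<close>, symmetric])
  also have "\<dots> = map_value (V, orient_by d E) (V, orient_by d E) id"
    unfolding map_value_def fst_conv snd_conv by (intro sum.cong refl) (simp add: orient_by_def)
  also have "\<dots> \<le> opt (V, orient_by d E) (V, orient_by d E)"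
    using \<open>finite V\<close> by (intro map_value_le_opt) auto
  finally show ?thesis by simp
qed

text \<open>A map g into the path scores one for each arc along which g rises by one.\<close>
lemma opt_orient_by_dipath_le:
  assumes sg: "simple_graph (V, E)" and "V \<noteq> {}" "0 < N"
  obtains h :: "'v \<Rightarrow> int" where "opt (V, orient_by d E) (dipath N) \<le> card {ed \<in> E. ascends h d ed}"
proof -
  have "finite V" using sg unfolding simple_graph_def by simp
  have "finite (fst (V, orient_by d E))" "finite (fst (dipath N))" "fst (dipath N) \<noteq> {}"
    using \<open>finite V\<close> \<open>0 < N\<close> by (auto simp: dipath_def)
  then obtain g
    where "opt (V, orient_by d E) (dipath N) = map_value (V, orient_by d E) (dipath N) g"
    by (rule opt_attained)
  define arcs where "arcs = {(x, y) \<in> V \<times> V. {x, y} \<in> E \<and> d {x, y} = y \<and> g y = Suc (g x)}"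
  have "map_value (V, orient_by d E) (dipath N) g
          = (\<Sum>x\<in>V. \<Sum>y\<in>V. if {x, y} \<in> E \<and> d {x, y} = y \<and> g y = Suc (g x) then 1 else 0)"
    unfolding map_value_def fst_conv snd_conv dipath_def
    by (intro sum.cong refl) (simp add: orient_by_def)
  also have "\<dots> = card arcs"
    unfolding arcs_def by (rule double_sum_indicator_eq_card[OF \<open>finite V\<close>])
  also have "card arcs \<le> card {ed \<in> E. ascends (\<lambda>v. int (g v)) d ed}"
  proof (rule card_inj_on_le)
    show "inj_on (\<lambda>(x, y). {x, y}) arcs"
    proof (rule inj_onI, clarify)
      fix x y x' y' assume arcs: "(x, y) \<in> arcs" "(x', y') \<in> arcs" and eq: "{x, y} = {x', y'}"
      have "d {x, y} = y" "d {x', y'} = y'" "x \<noteq> y"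
        using arcs simple_graph_edge_neq[OF sg] unfolding arcs_def by auto
      then have "y = y'" using eq by simp
      then show "x = x' \<and> y = y'" using eq \<open>x \<noteq> y\<close> by (simp add: doubleton_eq_iff)
    qed
    show "(\<lambda>(x, y). {x, y}) ` arcs \<subseteq> {ed \<in> E. ascends (\<lambda>v. int (g v)) d ed}"
      unfolding arcs_def ascends_def by auto
    show "finite {ed \<in> E. ascends (\<lambda>v. int (g v)) d ed}"
      using finite_edges[OF sg] by simp
  qed
  finally show thesis using that \<open>opt _ _ = _\<close> by simp
qed

lemma small_set_acyclic_of_girth:
  assumes "girth_ge G (k + 1)" "finite S" "card S \<le> k" "is_cycle G cs"
  shows "\<not> set cs \<subseteq> S"
proof
  assume "set cs \<subseteq> S"
  have "length cs = card (set cs)" using assms(4) distinct_card unfolding is_cycle_def by metis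
  also have "\<dots> \<le> card S" using card_mono[OF \<open>finite S\<close> \<open>set cs \<subseteq> S\<close>] .
  finally have "length cs \<le> k" using \<open>card S \<le> k\<close> by linarith
  moreover have "k + 1 \<le> length cs" using assms(1,4) unfolding girth_ge_def by blast
  ultimately show False by linarith
qed

lemma opt_le_opt_dipath_of_level_function:
  assumes B: "is_struc B" and S: "is_struc (S, e)" and ori: "is_orientation G e"
    and bound: "\<forall>x\<in>S. \<bar>q x\<bar> \<le> int k" and level: "\<forall>x\<in>S. \<forall>y\<in>S. e x y = 1 \<longrightarrow> q y = q x + 1"
  shows "opt B (S, e) \<le> opt B (dipath (2 * k + 1))"
proof (rule opt_mono[OF B S, of _ "\<lambda>v. nat (q v + int k)"])
  have shifted_bounds: "0 \<le> q v + int k" "q v + int k \<le> 2 * int k" if "v \<in> S" for v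
    using bound that by fastforce+
  then show "(\<lambda>v. nat (q v + int k)) ` fst (S, e) \<subseteq> fst (dipath (2 * k + 1))"
    by (auto simp: dipath_def nat_less_iff)
  show "snd (S, e) x y \<le> snd (dipath (2 * k + 1)) (nat (q x + int k)) (nat (q y + int k))"
    if "x \<in> fst (S, e)" "y \<in> fst (S, e)" for x y
  proof (cases "e x y = 1")
    case True
    then have "q y = q x + 1" using level that by simp
    then have "nat (q y + int k) = Suc (nat (q x + int k))"
      using shifted_bounds(1)[of x] that by simp
    then show ?thesis using True by (simp add: dipath_def)
  next
    case False
    then show ?thesis using orientation_01[OF ori, of x y] by (simp add: dipath_def)
  qed
qed (simp add: dipath_def)

lemma opt_le_opt_dipath_of_girth:
  assumes sg: "simple_graph G" and ori: "is_orientation G e" and A: "is_struc (fst G, e)"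
    and girth: "girth_ge G (k + 1)" and B: "is_struc B" and "card (fst B) \<le> k"
  shows "opt B (fst G, e) \<le> opt B (dipath (2 * k + 1))"
proof -
  have "finite (fst B)" "finite (fst (fst G, e))" "fst (fst G, e) \<noteq> {}"
    using A B unfolding is_struc_def by auto
  then obtain h where h: "h ` fst B \<subseteq> fst G" and opt: "opt B (fst G, e) = map_value B (fst G, e) h"
    by (rule opt_attained) auto
  define S where "S = h ` fst B"
  have "finite S" "S \<noteq> {}" using B unfolding S_def is_struc_def by auto
  have "card S \<le> k"
    using card_image_le[OF \<open>finite (fst B)\<close>, of h] \<open>card (fst B) \<le> k\<close> unfolding S_def by linarith
  obtain q where "\<forall>x\<in>S. \<bar>q x\<bar> \<le> int (card S)" and level: "\<forall>x\<in>S. \<forall>y\<in>S. e x y = 1 \<longrightarrow> q y = q x + 1"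
    using acyclic_orientation_has_level_function[OF sg ori \<open>finite S\<close>]
      small_set_acyclic_of_girth[OF girth \<open>finite S\<close> \<open>card S \<le> k\<close>] by blast
  then have bound: "\<forall>x\<in>S. \<bar>q x\<bar> \<le> int k" using \<open>card S \<le> k\<close> by fastforce
  have "is_struc (S, e)" using A \<open>finite S\<close> \<open>S \<noteq> {}\<close> unfolding is_struc_def by simp
  have "opt B (fst G, e) = map_value B (S, e) h" unfolding opt by (simp add: map_value_def)
  also have "\<dots> \<le> opt B (S, e)"
    using \<open>finite (fst B)\<close> \<open>finite S\<close> by (intro map_value_le_opt) (auto simp: S_def)
  also have "\<dots> \<le> opt B (dipath (2 * k + 1))"
    by (rule opt_le_opt_dipath_of_level_function[OF B \<open>is_struc (S, e)\<close> ori bound level])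
  finally show ?thesis .
qed

text \<open>A test P on which A scores a factor c below opt(A, A) while B scores at least opt(B, A)
  separates A from B; the tests used are P and a copy of A on \<nat>.\<close>
lemma d_opt_gt_of_separating_test:
  fixes c :: real
  assumes A: "is_struc A" and B: "is_struc B" and P: "is_struc (P :: nat struc)"
    and "0 < opt A A" and A_fails: "opt A P \<le> c * opt A A" and B_passes: "opt B A \<le> opt B P"
    and "0 < c" "c < 1"
  shows "ereal (- ln c / 3) < d_opt A B"
proof (rule ccontr)
  define \<epsilon> where "\<epsilon> = - ln c / 3"
  assume "\<not> ereal \<epsilon> < d_opt A B"
  then have close: "ln_dist (opt A C) (opt B C) \<le> ereal \<epsilon>" if "is_struc C" for C :: "nat struc"
    using ln_dist_le_d_opt[OF that, of A B] by simp
  have "opt A A \<le> exp \<epsilon> * opt B A"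
    using le_exp_mult_of_ln_dist_le[OF close[OF is_struc_nat_copy[OF A]]] \<open>0 < opt A A\<close>
      opt_nonneg[OF B A] by (simp add: opt_nat_copy A B)
  also have "\<dots> \<le> exp \<epsilon> * opt B P" using B_passes by simp
  also have "opt B P \<le> exp \<epsilon> * opt A P"
  proof (rule le_exp_mult_of_ln_dist_le)
    show "ln_dist (opt B P) (opt A P) \<le> ereal \<epsilon>" using close[OF P] by (simp add: ln_dist_commute)
    have "0 < exp \<epsilon> * opt B A" using \<open>opt A A \<le> exp \<epsilon> * opt B A\<close> \<open>0 < opt A A\<close> by linarith
    then show "0 < opt B P" using B_passes by (simp add: zero_less_mult_iff)
    show "0 \<le> opt A P" by (rule opt_nonneg[OF A P])
  qed
  also have "exp \<epsilon> * (exp \<epsilon> * opt A P) \<le> exp \<epsilon> * (exp \<epsilon> * (c * opt A A))"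
    using A_fails by simp
  also have "\<dots> = exp \<epsilon> * (exp \<epsilon> * c) * opt A A" by (simp add: algebra_simps)
  also have "exp \<epsilon> * (exp \<epsilon> * c) = exp (\<epsilon> + \<epsilon> + ln c)"
    using exp_ln[OF \<open>0 < c\<close>] by (simp only: exp_add mult.assoc)
  also have "\<epsilon> + \<epsilon> + ln c = ln c / 3" by (simp add: \<epsilon>_def)
  finally have "1 * opt A A \<le> exp (ln c / 3) * opt A A" by simp
  moreover have "exp (ln c / 3) < 1" using \<open>0 < c\<close> \<open>c < 1\<close> by simp
  ultimately show False using \<open>0 < opt A A\<close> by (simp add: mult_le_cancel_right)
qed

lemma d_opt_far_from_balanced_orientation_gt:
  fixes \<eta> :: real
  assumes sg: "simple_graph (V, E)" and "E \<noteq> {}" and girth: "girth_ge (V, E) (k + 1)"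
    and d: "d \<in> (\<Pi>\<^sub>E ed\<in>E. ed)"
    and far: "\<And>h. card {ed \<in> E. ascends h d ed} \<le> (1 - \<eta>) * card E"
    and "0 < \<eta>" "\<eta> < 1" and B: "is_struc B" "card (fst B) \<le> k"
  shows "ereal (- ln (1 - \<eta>) / 3) < d_opt (V, orient_by d E) B"
proof (rule d_opt_gt_of_separating_test[where P = "dipath (2 * k + 1)"])
  have "finite V" using sg unfolding simple_graph_def by simp
  moreover have "V \<noteq> {}" using sg \<open>E \<noteq> {}\<close> unfolding simple_graph_def by fastforce
  ultimately show A: "is_struc (V, orient_by d E)" by (rule is_struc_orient_by)
  show "is_struc B" "is_struc (dipath (2 * k + 1))" by (simp_all add: B is_struc_dipath)
  have "0 < card E" using \<open>E \<noteq> {}\<close> finite_edges[OF sg] by (simp add: card_gt_0_iff)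
  then show "0 < opt (V, orient_by d E) (V, orient_by d E)"
    using card_edges_le_opt_self[OF sg d] by linarith
  obtain h where "opt (V, orient_by d E) (dipath (2 * k + 1)) \<le> card {ed \<in> E. ascends h d ed}"
    using opt_orient_by_dipath_le[OF sg \<open>V \<noteq> {}\<close>] by auto
  also have "\<dots> \<le> (1 - \<eta>) * card E" by (rule far)
  also have "\<dots> \<le> (1 - \<eta>) * opt (V, orient_by d E) (V, orient_by d E)"
    using card_edges_le_opt_self[OF sg d] \<open>\<eta> < 1\<close> by (intro mult_left_mono) auto
  finally show "opt (V, orient_by d E) (dipath (2 * k + 1))
                  \<le> (1 - \<eta>) * opt (V, orient_by d E) (V, orient_by d E)" .
  show "opt B (V, orient_by d E) \<le> opt B (dipath (2 * k + 1))"
    using opt_le_opt_dipath_of_girth[of "(V, E)"] sg is_orientation_orient_by[OF sg d] A girth B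
    by simp
qed (use \<open>0 < \<eta>\<close> \<open>\<eta> < 1\<close> in simp_all)

lemma card_edges_ge_of_avg_degree:
  fixes \<delta> :: real
  assumes "0 < \<delta>" "2 + \<delta> \<le> avg_degree (V, E)"
  shows "0 < card V" "(2 + \<delta>) * card V \<le> 2 * real (card E)" "E \<noteq> {}"
proof -
  show "0 < card V"
    using assms unfolding avg_degree_def by (cases "card V = 0") auto
  then show "(2 + \<delta>) * card V \<le> 2 * real (card E)"
    using assms(2) unfolding avg_degree_def by (simp add: field_simps)
  moreover have "0 < (2 + \<delta>) * card V" using \<open>0 < card V\<close> assms(1) by simp
  ultimately show "E \<noteq> {}" by auto
qed

theorem lemma48:
  fixes \<delta> :: real and \<G> :: "'v graph set"
  assumes "\<delta> > 0"
    and "\<forall>G\<in>\<G>. simple_graph G"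
    and "\<forall>G\<in>\<G>. avg_degree G \<ge> 2 + \<delta>"
    and "\<forall>g::nat. \<exists>G\<in>\<G>. girth_ge G g"
  shows "\<not> size_pliable (orientations \<G>)"
proof
  assume "size_pliable (orientations \<G>)"
  obtain \<eta> x :: real where \<eta>: "0 < \<eta>" "\<eta> < 1" and x: "0 < x" "x \<le> 1"
    and few: "\<And>n m :: nat. 0 < n \<Longrightarrow> (2 + \<delta>) * n \<le> 2 * real m \<Longrightarrow>
                2 ^ n * (2 / x) powr (\<eta> * m) * (1 + x) ^ m < 2 ^ m"
    using exists_counting_parameters[OF assms(1)] by blast
  have "0 < - ln (1 - \<eta>) / 3" using \<eta> by simp
  then obtain k where small: "\<forall>A\<in>orientations \<G>. \<exists>B :: nat struc.
      is_struc B \<and> card (fst B) \<le> k \<and> d_opt A B \<le> ereal (- ln (1 - \<eta>) / 3)"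
    using \<open>size_pliable (orientations \<G>)\<close> unfolding size_pliable_def by blast
  obtain V E where G: "(V, E) \<in> \<G>" "girth_ge (V, E) (k + 1)"
    using assms(4) by (metis prod.collapse)
  have sg: "simple_graph (V, E)" using assms(2) G(1) by blast
  have dense: "0 < card V" "(2 + \<delta>) * card V \<le> 2 * real (card E)" and "E \<noteq> {}"
    using card_edges_ge_of_avg_degree assms(1,3) G(1) by blast+
  obtain d where d: "d \<in> (\<Pi>\<^sub>E ed\<in>E. ed)"
    and far: "\<And>h. card {ed \<in> E. ascends h d ed} \<le> (1 - \<eta>) * card E"
    using exists_orientation_far_from_balanced[OF sg x few[OF dense]] by blast
  have "(V, orient_by d E) \<in> orientations \<G>"
    unfolding orientations_def using G(1) is_orientation_orient_by[OF sg d] by force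
  then obtain B :: "nat struc" where "is_struc B" "card (fst B) \<le> k"
    and "d_opt (V, orient_by d E) B \<le> ereal (- ln (1 - \<eta>) / 3)"
    using small by blast
  with d_opt_far_from_balanced_orientation_gt[OF sg \<open>E \<noteq> {}\<close> G(2) d far \<eta>] show False
    by (meson not_less)
qed

end
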